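(* Let ${\bf a} = (a_1,\ldots,a_n, -\sum_i a_i)$ and ${\bf c} = (c_1,\ldots,c_n)$ be tuples of nonnegative integers $a_i$ and $c_i$. Then the volume and lattice points of the flow polytope $\mathcal{F}_{\Pi_n({\bf c})}({\bf a})$ equal \begin{align*} {\rm vol}\, \mathcal{F}_{\Pi_n({\bf c})}({\bf a}) &= \sum_{\bf j} \binom{c_1+\cdots + c_n}{j_1,\ldots,j_n} a_1^{j_1}\cdots a_n^{j_n},\\ K_{\Pi_n({\bf c})}({\bf a}) &= \sum_{\bf j} \binom{a_1+c_1}{j_1}\cdots \binom{a_n+c_n}{j_n},\\ &= \sum_{\bf j} \binom{a_1+j_1}{j_1}\binom{a_2+j_2-1}{j_2}\cdots \binom{a_{n}+j_n-1}{j_{n}}, \end{align*} where the three sums are over weak compositions ${\bf j}=(j_1,\ldots,j_n)$ of $\sum_i c_i$ that are $\geq (c_1,\ldots,c_n)$ in dominance order.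
   Context: For ${\bf c} = (c_1,\ldots,c_n)$ of nonnegative integers, $\Pi_n({\bf c})$ is the graph with vertices $[n+1]$ consisting of the directed path $1\to 2 \to \cdots \to n+1$ together with $c_i$ multiple edges $(i,n+1)$ for each $i$. For a graph $G$ on $[n+1]$ with edges directed $i\to j$ ($i<j$), the flow polytope $\mathcal{F}_G({\bf a})$ is the set of nonnegative real edge flows such that at each vertex $i\le n$ the outgoing flow minus incoming flow equals $a_i$; ${\rm vol}$ denotes normalized volume; and $K_G({\bf a})$ is the Kostant partition function, the number of nonnegative integer flows on $G$ with netflow ${\bf a}$ (i.e. the number of lattice points of $\mathcal{F}_G({\bf a})$). *)

theory Defs
  imports "HOL-Analysis.Analysis"
begin

text \<open>A directed multigraph on vertices 1..n+1 is a list of edges (i,j); edge number k is G!k.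
  The graph Pi_n(c): path edges (i,i+1), i=1..n (indices 0..n-1), followed by c_i copies of (i,n+1)
  for i=1..n (indices n..n+C-1, C = c_1+...+c_n).\<close>
definition Pi_graph :: "nat \<Rightarrow> (nat \<Rightarrow> nat) \<Rightarrow> (nat \<times> nat) list" where
  "Pi_graph n c = map (\<lambda>i. (i, Suc i)) [1..<n+1]
                  @ concat (map (\<lambda>i. replicate (c i) (i, n+1)) [1..<n+1])"

definition flow_polytope :: "nat \<Rightarrow> (nat \<times> nat) list \<Rightarrow> (nat \<Rightarrow> real) \<Rightarrow> (nat \<Rightarrow> real) set" where
  "flow_polytope n G a = {f. (\<forall>k. length G \<le> k \<longrightarrow> f k = 0) \<and> (\<forall>k<length G. 0 \<le> f k) \<and>
     (\<forall>i\<in>{1..n}. (\<Sum>k\<in>{k. k < length G \<and> fst (G!k) = i}. f k)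
                 - (\<Sum>k\<in>{k. k < length G \<and> snd (G!k) = i}. f k) = a i)}"

definition kostant :: "nat \<Rightarrow> (nat \<times> nat) list \<Rightarrow> (nat \<Rightarrow> int) \<Rightarrow> nat" where
  "kostant n G a = card {f :: nat \<Rightarrow> nat. (\<forall>k. length G \<le> k \<longrightarrow> f k = 0) \<and>
     (\<forall>i\<in>{1..n}. int (\<Sum>k\<in>{k. k < length G \<and> fst (G!k) = i}. f k)
                 - int (\<Sum>k\<in>{k. k < length G \<and> snd (G!k) = i}. f k) = a i)}"

text \<open>Normalized volume of a polytope P whose coordinate projection onto the index set S
  is a lattice-preserving affine bijection onto a full-dimensional body in R^S:
  (card S)! times the Lebesgue measure of the projection.\<close>
definition norm_vol_proj :: "nat set \<Rightarrow> (nat \<Rightarrow> real) set \<Rightarrow> real" where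
  "norm_vol_proj S P = fact (card S) * measure (Pi\<^sub>M S (\<lambda>_. lborel)) ((\<lambda>f. restrict f S) ` P)"

text \<open>Normalized volume of F_{Pi_n(c)}(a): projection onto the multi-edge coordinates
  (the path-edge flows are integral affine functions of these).\<close>
definition vol_Pi_flow :: "nat \<Rightarrow> (nat \<Rightarrow> nat) \<Rightarrow> (nat \<Rightarrow> real) \<Rightarrow> real" where
  "vol_Pi_flow n c a = norm_vol_proj {n..<n + sum c {1..n}} (flow_polytope n (Pi_graph n c) a)"

definition dom_compositions :: "nat \<Rightarrow> (nat \<Rightarrow> nat) \<Rightarrow> (nat \<Rightarrow> nat) set" where
  "dom_compositions n c = {j \<in> {1..n} \<rightarrow>\<^sub>E {0..sum c {1..n}}. sum j {1..n} = sum c {1..n} \<and>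
     (\<forall>k\<in>{1..n}. sum c {1..k} \<le> sum j {1..k})}"

end

(*
  The flow on the path edge (m, m+1) of Pi_n(c) is a_1 + ... + a_m minus the flow on the
  multiple edges leaving the vertices 1..m. Projecting onto the multiple edges therefore maps
  the flow polytope, together with its lattice points, bijectively onto the staircase region
  {y >= 0 : for all m, the multiple edges leaving vertices <= m carry at most a_1 + ... + a_m}.

  Volume and lattice points of this region are computed by peeling off one multiple edge at a
  time. An edge leaving the lowest vertex k carries some t in [0, a_k], and the remaining
  region is the same kind of region with a_k replaced by a_k - t; once no edge leaves k,
  the budget a_k simply merges into a_(k+1). Sums over the compositions dominating c satisfy
  the same two recursions, through the bijections j |-> j + e_k and
  (j, p) |-> (.., p, j_(k+1) - p, ..), provided the weights satisfy a hockey-stick identity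
  (for peeling) and a Vandermonde-type convolution identity (for merging).
*)

theory Submission
  imports Defs "HOL-Computational_Algebra.Formal_Power_Series"
begin

section \<open>Compositions dominating c\<close>

definition dominating_compositions :: "nat \<Rightarrow> nat \<Rightarrow> (nat \<Rightarrow> nat) \<Rightarrow> (nat \<Rightarrow> nat) set" where
  "dominating_compositions k n c = {j \<in> {k..n} \<rightarrow>\<^sub>E UNIV. sum j {k..n} = sum c {k..n} \<and>
     (\<forall>m\<in>{k..n}. sum c {k..m} \<le> sum j {k..m})}"

lemma dominating_compositions_subset:
  "dominating_compositions k n c \<subseteq> {k..n} \<rightarrow>\<^sub>E {0..sum c {k..n}}"
proof
  fix j assume j: "j \<in> dominating_compositions k n c"
  have "j i \<le> sum c {k..n}" if "i \<in> {k..n}" for i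
    using j that member_le_sum[of i "{k..n}" j] unfolding dominating_compositions_def by auto
  then show "j \<in> {k..n} \<rightarrow>\<^sub>E {0..sum c {k..n}}"
    using j unfolding dominating_compositions_def by auto
qed

lemma finite_dominating_compositions: "finite (dominating_compositions k n c)"
  by (rule finite_subset[OF dominating_compositions_subset]) (simp add: finite_PiE)

lemma dom_compositions_eq: "dom_compositions n c = dominating_compositions 1 n c"
proof -
  have "{1..n} \<rightarrow>\<^sub>E {0..sum c {1..n}} \<subseteq> {1..n} \<rightarrow>\<^sub>E UNIV"
    by (rule PiE_mono) auto
  with dominating_compositions_subset[of 1 n c] show ?thesis
    unfolding dom_compositions_def dominating_compositions_def by blast
qed

lemma dominating_compositions_last:
  "c n = 0 \<Longrightarrow> dominating_compositions n n c = {(\<lambda>_. undefined)(n := 0)}"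
  unfolding dominating_compositions_def by (auto simp: PiE_def extensional_def fun_eq_iff)

lemma dominating_compositions_subset_PiE: "dominating_compositions k n c \<subseteq> {k..n} \<rightarrow>\<^sub>E UNIV"
  unfolding dominating_compositions_def by blast

lemma dominating_compositions_first_ge:
  assumes "j \<in> dominating_compositions k n c" "k \<le> n"
  shows "c k \<le> j k"
proof -
  have "\<forall>m\<in>{k..n}. sum c {k..m} \<le> sum j {k..m}"
    using assms(1) unfolding dominating_compositions_def by blast
  then have "sum c {k..k} \<le> sum j {k..k}"
    using assms(2) by (meson atLeastAtMost_iff order_refl)
  then show ?thesis by simp
qed

lemma sum_upd_atLeastAtMost_first:
  fixes f :: "nat \<Rightarrow> 'a::comm_monoid_add"
  assumes "k \<le> m"
  shows "sum (f(k := x)) {k..m} = x + sum f {Suc k..m}"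
  using assms by (simp add: sum.atLeast_Suc_atMost)

lemma dominating_compositions_peel:
  assumes "k \<le> n" "1 \<le> c k"
  shows "bij_betw (\<lambda>j. j(k := Suc (j k)))
           (dominating_compositions k n (c(k := c k - 1))) (dominating_compositions k n c)"
proof -
  let ?c = "c(k := c k - 1)"
  have shift_iff: "j(k := Suc (j k)) \<in> dominating_compositions k n c \<longleftrightarrow> j \<in> dominating_compositions k n ?c"
    if "j \<in> {k..n} \<rightarrow>\<^sub>E UNIV" for j
  proof -
    have sums: "sum (j(k := Suc (j k))) {k..m} = Suc (sum j {k..m})" "sum c {k..m} = Suc (sum ?c {k..m})"
      if "m \<in> {k..n}" for m
      using that assms by (simp_all add: sum_upd_atLeastAtMost_first sum.atLeast_Suc_atMost)
    have "j(k := Suc (j k)) \<in> {k..n} \<rightarrow>\<^sub>E UNIV"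
      using that assms by (auto simp: PiE_def extensional_def)
    moreover have "(\<forall>m\<in>{k..n}. sum c {k..m} \<le> sum (j(k := Suc (j k))) {k..m}) \<longleftrightarrow>
        (\<forall>m\<in>{k..n}. sum ?c {k..m} \<le> sum j {k..m})"
      using sums by simp
    ultimately show ?thesis
      using that sums[of n] assms(1) unfolding dominating_compositions_def by simp
  qed
  have unshift: "(j(k := j k - 1))(k := Suc ((j(k := j k - 1)) k)) = j"
    if "j \<in> dominating_compositions k n c" for j
    using dominating_compositions_first_ge[OF that] assms by auto
  show ?thesis
  proof (rule bij_betw_byWitness[where f' = "\<lambda>j. j(k := j k - 1)"])
    show "(\<lambda>j. j(k := j k - 1)) ` dominating_compositions k n c \<subseteq> dominating_compositions k n ?c"
    proof clarify
      fix j assume j: "j \<in> dominating_compositions k n c"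
      have "j(k := j k - 1) \<in> {k..n} \<rightarrow>\<^sub>E UNIV"
        using j assms by (auto simp: dominating_compositions_def PiE_def extensional_def)
      then show "j(k := j k - 1) \<in> dominating_compositions k n ?c"
        using shift_iff unshift[OF j] j by metis
    qed
    show "(\<lambda>j. j(k := Suc (j k))) ` dominating_compositions k n ?c \<subseteq> dominating_compositions k n c"
      using shift_iff dominating_compositions_subset_PiE by blast
  qed (use unshift in auto)
qed

lemma dominating_compositions_merge:
  assumes "k < n" "c k = 0"
  shows "bij_betw (\<lambda>(j, p). j(k := p, Suc k := j (Suc k) - p))
           (SIGMA j:dominating_compositions (Suc k) n c. {0..j (Suc k)}) (dominating_compositions k n c)"
proof -
  define merge where "merge J = J(k := undefined, Suc k := J k + J (Suc k))" for J :: "nat \<Rightarrow> nat"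
  have merge_iff: "J \<in> dominating_compositions k n c \<longleftrightarrow> merge J \<in> dominating_compositions (Suc k) n c"
    if J: "J \<in> {k..n} \<rightarrow>\<^sub>E UNIV" for J
  proof -
    have sums: "sum J {k..m} = sum (merge J) {Suc k..m}" "sum c {k..m} = sum c {Suc k..m}"
      if "Suc k \<le> m" for m
      using that assms by (simp_all add: merge_def sum.atLeast_Suc_atMost)
    have "merge J \<in> {Suc k..n} \<rightarrow>\<^sub>E UNIV"
      using J assms by (auto simp: merge_def PiE_def extensional_def)
    moreover have "(\<forall>m\<in>{k..n}. sum c {k..m} \<le> sum J {k..m}) \<longleftrightarrow>
        (\<forall>m\<in>{Suc k..n}. sum c {Suc k..m} \<le> sum (merge J) {Suc k..m})"
    proof -
      have "{k..n} = insert k {Suc k..n}" using assms by auto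
      then show ?thesis using sums assms by auto
    qed
    ultimately show ?thesis
      using J sums[of n] assms(1) unfolding dominating_compositions_def by simp
  qed
  have merge_split: "merge (j(k := p, Suc k := j (Suc k) - p)) = j"
    if "j \<in> dominating_compositions (Suc k) n c" "p \<le> j (Suc k)" for j p
    using that dominating_compositions_subset_PiE
    by (fastforce simp: merge_def fun_eq_iff PiE_def extensional_def)
  have split_mem: "j(k := p, Suc k := j (Suc k) - p) \<in> dominating_compositions k n c"
    if "j \<in> dominating_compositions (Suc k) n c" "p \<le> j (Suc k)" for j p
  proof -
    have "j(k := p, Suc k := j (Suc k) - p) \<in> {k..n} \<rightarrow>\<^sub>E UNIV"
      using that assms dominating_compositions_subset_PiE by (fastforce simp: PiE_def extensional_def)
    then show ?thesis
      using merge_iff merge_split[OF that] that(1) by metis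
  qed
  have merge_mem: "merge J \<in> dominating_compositions (Suc k) n c" if "J \<in> dominating_compositions k n c" for J
    using that merge_iff dominating_compositions_subset_PiE by blast
  show ?thesis
    by (rule bij_betw_byWitness[where f' = "\<lambda>J. (merge J, J k)"])
       (auto simp: merge_split split_mem merge_mem, auto simp: merge_def fun_eq_iff)
qed

definition dominating_sum ::
    "nat \<Rightarrow> nat \<Rightarrow> (nat \<Rightarrow> nat) \<Rightarrow> (nat \<Rightarrow> nat \<Rightarrow> 'a::comm_semiring_1) \<Rightarrow> 'a" where
  "dominating_sum k n c w = (\<Sum>j\<in>dominating_compositions k n c. \<Prod>i\<in>{k..n}. w i (j i))"

lemma dominating_sum_cong:
  assumes "\<And>j i. j \<in> dominating_compositions k n c \<Longrightarrow> i \<in> {k..n} \<Longrightarrow> w i (j i) = w' i (j i)"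
  shows "dominating_sum k n c w = dominating_sum k n c w'"
  unfolding dominating_sum_def using assms by (intro sum.cong prod.cong) auto

lemma dominating_sum_last: "c n = 0 \<Longrightarrow> dominating_sum n n c w = w n 0"
  unfolding dominating_sum_def by (simp add: dominating_compositions_last)

lemma sum_dominating_sum_upd_first:
  assumes "k \<le> n"
  shows "(\<Sum>t\<in>T. dominating_sum k n c (w(k := u t))) = dominating_sum k n c (w(k := \<lambda>x. \<Sum>t\<in>T. u t x))"
proof -
  have prod_upd: "(\<Prod>i\<in>{k..n}. (w(k := f)) i (j i)) = f (j k) * (\<Prod>i\<in>{Suc k..n}. w i (j i))" for f j
    using assms by (simp add: prod.atLeast_Suc_atMost)
  show ?thesis
    unfolding dominating_sum_def prod_upd sum_distrib_right by (rule sum.swap)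
qed

lemma dominating_sum_peel:
  assumes "k \<le> n" "1 \<le> c k"
  shows "dominating_sum k n c w = dominating_sum k n (c(k := c k - 1)) (w(k := \<lambda>x. w k (Suc x)))"
  unfolding dominating_sum_def
  by (subst sum.reindex_bij_betw[OF dominating_compositions_peel[where c=c, OF assms], symmetric])
     (intro sum.cong prod.cong; simp)

lemma dominating_sum_merge:
  assumes "k < n" "c k = 0"
  shows "dominating_sum k n c w =
    dominating_sum (Suc k) n c (w(Suc k := \<lambda>x. \<Sum>p\<in>{0..x}. w k p * w (Suc k) (x - p)))"
proof -
  let ?D = "dominating_compositions (Suc k) n c"
  let ?R = "\<lambda>j. \<Prod>i\<in>{Suc (Suc k)..n}. w i (j i)"
  have "dominating_sum k n c w =
      (\<Sum>(j, p)\<in>(SIGMA j:?D. {0..j (Suc k)}). \<Prod>i\<in>{k..n}. w i ((j(k := p, Suc k := j (Suc k) - p)) i))"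
    unfolding dominating_sum_def
    by (subst sum.reindex_bij_betw[OF dominating_compositions_merge[where c=c, OF assms], symmetric])
       (simp add: split_beta)
  also have "\<dots> = (\<Sum>j\<in>?D. \<Sum>p\<in>{0..j (Suc k)}. w k p * w (Suc k) (j (Suc k) - p) * ?R j)"
    using assms
    by (subst sum.Sigma[symmetric])
       (auto simp: finite_dominating_compositions prod.atLeast_Suc_atMost mult.assoc intro!: sum.cong prod.cong)
  also have "\<dots> = dominating_sum (Suc k) n c (w(Suc k := \<lambda>x. \<Sum>p\<in>{0..x}. w k p * w (Suc k) (x - p)))"
    unfolding dominating_sum_def using assms
    by (intro sum.cong refl) (auto simp: prod.atLeast_Suc_atMost sum_distrib_right intro!: prod.cong)
  finally show ?thesis .
qed

lemma sum_choose_reversed: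
  assumes "b \<le> x"
  shows "(\<Sum>t\<in>{0..a}. (a - t + b) choose x) = Suc (a + b) choose Suc x"
proof -
  have "(\<Sum>t\<in>{0..a}. (a - t + b) choose x) = (\<Sum>s\<in>{0..a}. (s + b) choose x)"
    by (subst sum.atLeastAtMost_rev) simp
  also have "\<dots> = Suc (a + b) choose Suc x"
    using assms by (induction a) auto
  finally show ?thesis .
qed

text \<open>Upper negation turns this into the Chu-Vandermonde identity for generalised binomials.\<close>

lemma sum_multichoose_vandermonde:
  "(\<Sum>p\<in>{0..m}. ((x + p) choose p) * ((y + (m - p) - 1) choose (m - p))) = (x + y + m) choose m"
proof -
  have multichoose_neg: "real ((u + p - 1) choose p) = (-1) ^ p * (- real u gchoose p)" for u p
  proof -
    have "real ((u + p - 1) choose p) = (real u - 1 + of_nat p) gchoose p"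
      by (cases "u + p = 0") (auto simp: binomial_gbinomial of_nat_diff algebra_simps)
    also have "\<dots> = (-1) ^ p * (- real u gchoose p)"
      by (subst gbinomial_minus') simp
    finally show ?thesis .
  qed
  have summand: "real (((x + p) choose p) * ((y + (m - p) - 1) choose (m - p)))
      = (-1) ^ m * ((- real (Suc x) gchoose p) * (- real y gchoose (m - p)))" if "p \<le> m" for p
  proof -
    have "real ((x + p) choose p) = (-1) ^ p * (- real (Suc x) gchoose p)"
      using multichoose_neg[of "Suc x" p] by simp
    then have "real (((x + p) choose p) * ((y + (m - p) - 1) choose (m - p)))
        = ((-1) ^ p * (-1) ^ (m - p)) * ((- real (Suc x) gchoose p) * (- real y gchoose (m - p)))"
      unfolding of_nat_mult multichoose_neg by (simp only: mult_ac)
    also have "(-1::real) ^ p * (-1) ^ (m - p) = (-1) ^ m"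
      using that by (simp flip: power_add)
    finally show ?thesis .
  qed
  have "real (\<Sum>p\<in>{0..m}. ((x + p) choose p) * ((y + (m - p) - 1) choose (m - p)))
      = (-1) ^ m * (\<Sum>p\<in>{0..m}. (- real (Suc x) gchoose p) * (- real y gchoose (m - p)))"
    unfolding of_nat_sum sum_distrib_left by (intro sum.cong refl summand) simp
  also have "\<dots> = (-1) ^ m * ((- real (Suc x) + - real y) gchoose m)"
    by (simp only: gbinomial_Vandermonde)
  also have "- real (Suc x) + - real y = - real (Suc x + y)"
    by simp
  also have "(-1) ^ m * (- real (Suc x + y) gchoose m) = real ((Suc x + y + m - 1) choose m)"
    by (rule multichoose_neg[symmetric])
  also have "Suc x + y + m - 1 = x + y + m"
    by simp
  finally show ?thesis by (simp only: of_nat_eq_iff)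
qed

lemma power_div_fact_binomial:
  fixes x y :: real
  shows "(x + y) ^ m / fact m = (\<Sum>p\<in>{0..m}. x ^ p / fact p * (y ^ (m - p) / fact (m - p)))"
proof -
  have "(x + y) ^ m / fact m = (\<Sum>p\<le>m. of_nat (m choose p) * x ^ p * y ^ (m - p)) / fact m"
    by (simp add: binomial_ring)
  also have "\<dots> = (\<Sum>p\<le>m. x ^ p / fact p * (y ^ (m - p) / fact (m - p)))"
    unfolding sum_divide_distrib by (intro sum.cong refl) (simp add: binomial_fact field_simps)
  finally show ?thesis by (simp add: atLeast0AtMost)
qed

definition binomial_weight :: "(nat \<Rightarrow> nat) \<Rightarrow> (nat \<Rightarrow> nat) \<Rightarrow> nat \<Rightarrow> nat \<Rightarrow> nat" where
  "binomial_weight a c i x = (a i + c i) choose x"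

definition multichoose_weight :: "nat \<Rightarrow> (nat \<Rightarrow> nat) \<Rightarrow> nat \<Rightarrow> nat \<Rightarrow> nat" where
  "multichoose_weight k a i x = (if i = k then (a i + x) choose x else (a i + x - 1) choose x)"

definition power_weight :: "(nat \<Rightarrow> real) \<Rightarrow> nat \<Rightarrow> nat \<Rightarrow> real" where
  "power_weight a i x = a i ^ x / fact x"

lemma binomial_weight_peel:
  assumes "k \<le> n" "1 \<le> c k"
  shows "dominating_sum k n c (binomial_weight a c) =
    (\<Sum>t\<in>{0..a k}. dominating_sum k n (c(k := c k - 1))
       (binomial_weight (a(k := a k - t)) (c(k := c k - 1))))"
proof -
  let ?c = "c(k := c k - 1)" and ?w = "binomial_weight a c"
  have "(\<Sum>t\<in>{0..a k}. dominating_sum k n ?c (binomial_weight (a(k := a k - t)) ?c))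
      = (\<Sum>t\<in>{0..a k}. dominating_sum k n ?c (?w(k := \<lambda>x. (a k - t + (c k - 1)) choose x)))"
    by (intro sum.cong refl arg_cong[where f = "dominating_sum k n ?c"])
       (auto simp: binomial_weight_def fun_eq_iff)
  also have "\<dots> = dominating_sum k n ?c (?w(k := \<lambda>x. \<Sum>t\<in>{0..a k}. (a k - t + (c k - 1)) choose x))"
    by (rule sum_dominating_sum_upd_first[OF assms(1)])
  also have "\<dots> = dominating_sum k n ?c (?w(k := \<lambda>x. ?w k (Suc x)))"
  proof (rule dominating_sum_cong)
    fix j i assume "j \<in> dominating_compositions k n ?c"
    then have "c k - 1 \<le> j k"
      using dominating_compositions_first_ge assms(1) by fastforce
    then have "(\<Sum>t\<in>{0..a k}. (a k - t + (c k - 1)) choose j k) = ?w k (Suc (j k))"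
      using assms(2) by (simp only: sum_choose_reversed) (simp add: binomial_weight_def)
    then show "(?w(k := \<lambda>x. \<Sum>t\<in>{0..a k}. (a k - t + (c k - 1)) choose x)) i (j i)
        = (?w(k := \<lambda>x. ?w k (Suc x))) i (j i)"
      by simp
  qed
  also have "\<dots> = dominating_sum k n c ?w"
    by (rule dominating_sum_peel[where c=c, OF assms, symmetric])
  finally show ?thesis ..
qed

lemma binomial_weight_merge:
  assumes "k < n" "c k = 0"
  shows "dominating_sum k n c (binomial_weight a c) =
    dominating_sum (Suc k) n c (binomial_weight (a(Suc k := a k + a (Suc k))) c)"
  unfolding dominating_sum_merge[where c=c, OF assms] using assms
  by (intro dominating_sum_cong) (auto simp: binomial_weight_def atLeast0AtMost vandermonde add.assoc)

lemma multichoose_weight_peel: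
  assumes "k \<le> n" "1 \<le> c k"
  shows "dominating_sum k n c (multichoose_weight k a) =
    (\<Sum>t\<in>{0..a k}. dominating_sum k n (c(k := c k - 1)) (multichoose_weight k (a(k := a k - t))))"
proof -
  let ?c = "c(k := c k - 1)" and ?w = "multichoose_weight k a"
  have "(\<Sum>t\<in>{0..a k}. dominating_sum k n ?c (multichoose_weight k (a(k := a k - t))))
      = (\<Sum>t\<in>{0..a k}. dominating_sum k n ?c (?w(k := \<lambda>x. (a k - t + x) choose x)))"
    by (intro sum.cong refl arg_cong[where f = "dominating_sum k n ?c"])
       (auto simp: multichoose_weight_def fun_eq_iff)
  also have "\<dots> = dominating_sum k n ?c (?w(k := \<lambda>x. \<Sum>t\<in>{0..a k}. (a k - t + x) choose x))"
    by (rule sum_dominating_sum_upd_first[OF assms(1)])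
  also have "\<dots> = dominating_sum k n ?c (?w(k := \<lambda>x. ?w k (Suc x)))"
  proof -
    have "(\<Sum>t\<in>{0..a k}. (a k - t + x) choose x) = ?w k (Suc x)" for x
      by (simp only: sum_choose_reversed[OF order_refl]) (simp add: multichoose_weight_def)
    then show ?thesis
      by (intro dominating_sum_cong) simp
  qed
  also have "\<dots> = dominating_sum k n c ?w"
    by (rule dominating_sum_peel[where c=c, OF assms, symmetric])
  finally show ?thesis ..
qed

lemma multichoose_weight_merge:
  assumes "k < n" "c k = 0"
  shows "dominating_sum k n c (multichoose_weight k a) =
    dominating_sum (Suc k) n c (multichoose_weight (Suc k) (a(Suc k := a k + a (Suc k))))"
proof -
  have "(\<Sum>p\<in>{0..x}. multichoose_weight k a k p * multichoose_weight k a (Suc k) (x - p))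
      = multichoose_weight (Suc k) (a(Suc k := a k + a (Suc k))) (Suc k) x" for x
    using sum_multichoose_vandermonde[of "a k" "a (Suc k)" x] by (simp add: multichoose_weight_def)
  then show ?thesis
    unfolding dominating_sum_merge[where c=c, OF assms]
    by (intro dominating_sum_cong) (auto simp: multichoose_weight_def)
qed

lemma power_weight_merge:
  assumes "k < n" "c k = 0"
  shows "dominating_sum k n c (power_weight a) =
    dominating_sum (Suc k) n c (power_weight (a(Suc k := a k + a (Suc k))))"
  unfolding dominating_sum_merge[where c=c, OF assms]
  by (intro dominating_sum_cong) (auto simp: power_weight_def power_div_fact_binomial)

section \<open>Staircase regions\<close>

text \<open>For the multiple edges E of Pi_n(c), labelled by their tails v, this is the projection of the
  flow polytope: the m-th inequality says that the path edge leaving m carries nonnegative flow.\<close>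

definition staircase ::
    "nat set \<Rightarrow> (nat \<Rightarrow> nat) \<Rightarrow> nat \<Rightarrow> nat \<Rightarrow> (nat \<Rightarrow> 'a::linordered_semidom) \<Rightarrow> (nat \<Rightarrow> 'a) set" where
  "staircase E v k n a = {y \<in> E \<rightarrow>\<^sub>E {0..}. \<forall>m\<in>{k..n}. sum y {e\<in>E. v e \<le> m} \<le> sum a {k..m}}"

lemma sum_upd_diff_first:
  fixes a :: "nat \<Rightarrow> 'a::linordered_semidom"
  assumes "k \<le> m" "t \<le> a k"
  shows "sum (a(k := a k - t)) {k..m} + t = sum a {k..m}"
proof -
  have "sum (a(k := a k - t)) {k..m} + t = (a k - t + t) + sum a {Suc k..m}"
    by (subst sum_upd_atLeastAtMost_first[OF assms(1)]) (simp add: algebra_simps)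
  also have "\<dots> = sum a {k..m}"
    using assms by (simp add: sum.atLeast_Suc_atMost)
  finally show ?thesis .
qed

lemma sum_upd_insert_edge:
  fixes y :: "nat \<Rightarrow> 'a::comm_monoid_add"
  assumes "finite E" "e \<in> E" "v e \<le> m"
  shows "sum (y(e := t)) {e'\<in>E. v e' \<le> m} = t + sum y {e'\<in>E - {e}. v e' \<le> m}"
proof -
  have "{e'\<in>E. v e' \<le> m} = insert e {e'\<in>E - {e}. v e' \<le> m}"
    using assms by auto
  then show ?thesis
    using assms(1) by (simp add: sum.insert_if)
qed

lemma staircase_peel_iff:
  fixes a :: "nat \<Rightarrow> 'a::linordered_semidom"
  assumes "finite E" "e \<in> E" "v e = k" "k \<le> n" "y \<in> (E - {e}) \<rightarrow>\<^sub>E UNIV"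
  shows "y(e := t) \<in> staircase E v k n a \<longleftrightarrow>
    t \<in> {0..a k} \<and> y \<in> staircase (E - {e}) v k n (a(k := a k - t))"
proof -
  have edge_sums: "sum (y(e := t)) {e'\<in>E. v e' \<le> m} = t + sum y {e'\<in>E - {e}. v e' \<le> m}"
    if "m \<in> {k..n}" for m
    using that assms by (intro sum_upd_insert_edge) auto
  have nonneg: "y(e := t) \<in> E \<rightarrow>\<^sub>E {0..} \<longleftrightarrow> 0 \<le> t \<and> y \<in> (E - {e}) \<rightarrow>\<^sub>E {0..}"
    using assms(2,5) by (auto simp: PiE_def Pi_def extensional_def split: if_splits)
  have "y(e := t) \<in> staircase E v k n a \<longleftrightarrow> 0 \<le> t \<and> y \<in> (E - {e}) \<rightarrow>\<^sub>E {0..} \<and>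
      (\<forall>m\<in>{k..n}. t + sum y {e'\<in>E - {e}. v e' \<le> m} \<le> sum a {k..m})"
    unfolding staircase_def mem_Collect_eq nonneg using edge_sums by auto
  moreover have "t \<le> a k" if "y(e := t) \<in> staircase E v k n a"
  proof -
    have "t + sum y {e'\<in>E - {e}. v e' \<le> k} \<le> sum a {k..k}"
      using that assms(4) edge_sums[of k] unfolding staircase_def
      by (metis (no_types, lifting) atLeastAtMost_iff mem_Collect_eq order_refl)
    then have "t + sum y {e'\<in>E - {e}. v e' \<le> k} \<le> a k"
      by simp
    moreover have "0 \<le> sum y {e'\<in>E - {e}. v e' \<le> k}"
      using that nonneg unfolding staircase_def by (intro sum_nonneg) (auto simp: PiE_def Pi_def)
    ultimately show ?thesis
      by (metis le_add_same_cancel1 order_trans)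
  qed
  moreover have "t + s \<le> sum a {k..m} \<longleftrightarrow> s \<le> sum (a(k := a k - t)) {k..m}"
    if "t \<le> a k" "m \<in> {k..n}" for s m
    using sum_upd_diff_first[of k m t a] that by (metis add.commute add_le_cancel_right atLeastAtMost_iff)
  ultimately show ?thesis
    unfolding staircase_def by auto
qed

lemma staircase_merge:
  fixes a :: "nat \<Rightarrow> 'a::linordered_semidom"
  assumes "\<forall>e\<in>E. k < v e" "k \<le> n" "0 \<le> a k"
  shows "staircase E v k n a = staircase E v (Suc k) n (a(Suc k := a k + a (Suc k)))"
proof -
  have "sum y {e\<in>E. v e \<le> k} = 0" for y :: "nat \<Rightarrow> 'a"
    using assms(1) by (intro sum.neutral) force
  moreover have "{k..n} = insert k {Suc k..n}"
    using assms(2) by auto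
  moreover have "sum (a(Suc k := a k + a (Suc k))) {Suc k..m} = sum a {k..m}" if "Suc k \<le> m" for m
    using that by (simp add: sum_upd_atLeastAtMost_first sum.atLeast_Suc_atMost add.assoc)
  ultimately show ?thesis
    using assms(3) unfolding staircase_def by auto
qed

lemma staircase_empty: "0 \<le> a n \<Longrightarrow> staircase {} v n n a = {\<lambda>_. undefined}"
  unfolding staircase_def by auto

lemma labelled_edges_induct[consumes 4, case_names peel merge last]:
  assumes "finite E" "\<forall>e\<in>E. v e \<in> {k..n}" "k \<le> n" "\<forall>i\<in>{k..n}. c i = card {e\<in>E. v e = i}"
    and peel: "\<And>E k c e. finite E \<Longrightarrow> \<forall>e\<in>E. v e \<in> {k..n} \<Longrightarrow> k \<le> n \<Longrightarrow> e \<in> E \<Longrightarrow> v e = k \<Longrightarrow>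
      1 \<le> c k \<Longrightarrow> P (E - {e}) k (c(k := c k - 1)) \<Longrightarrow> P E k c"
    and merge: "\<And>E k c. \<forall>e\<in>E. v e \<in> {Suc k..n} \<Longrightarrow> k < n \<Longrightarrow> c k = 0 \<Longrightarrow> P E (Suc k) c \<Longrightarrow> P E k c"
    and last: "\<And>c. c n = 0 \<Longrightarrow> P {} n c"
  shows "P E k c"
  using assms(1-4)
proof (induction "card E + (n - k)" arbitrary: E k c rule: less_induct)
  case less
  show ?case
  proof (cases "\<exists>e\<in>E. v e = k")
    case True
    then obtain e where e: "e \<in> E" "v e = k" by blast
    have "c k = card {e\<in>E. v e = k}" "card {e\<in>E. v e = k} \<noteq> 0"
      using e less.prems by auto
    then have ck: "1 \<le> c k" by simp
    have "P (E - {e}) k (c(k := c k - 1))"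
    proof (rule less.hyps)
      have "card E > 0"
        using e less.prems(1) card_gt_0_iff by blast
      then show "card (E - {e}) + (n - k) < card E + (n - k)"
        using e by (simp add: card_Diff_singleton)
      have "{e'\<in>E - {e}. v e' = i} = {e'\<in>E. v e' = i} - {e}" for i
        by auto
      then show "\<forall>i\<in>{k..n}. (c(k := c k - 1)) i = card {e'\<in>E - {e}. v e' = i}"
        using e less.prems by (auto simp: card_Diff_singleton_if)
    qed (use less.prems in auto)
    then show ?thesis
      using peel less.prems(1-3) e ck by blast
  next
    case no_edge: False
    show ?thesis
    proof (cases "k < n")
      case True
      have "c k = card {e\<in>E. v e = k}"
        using less.prems(3,4) by simp
      also have "{e\<in>E. v e = k} = {}"
        using no_edge by auto
      finally have "c k = 0"
        by simp
      moreover have "\<forall>e\<in>E. v e \<in> {Suc k..n}"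
        using less.prems(2) no_edge by (auto simp: Suc_le_eq le_less)
      moreover have "P E (Suc k) c"
        using True calculation(2) less.prems by (intro less.hyps) auto
      ultimately show ?thesis
        using merge True by blast
    next
      case False
      then have "k = n" "E = {}"
        using less.prems(2,3) no_edge by auto
      with less.prems(4) show ?thesis
        using last by simp
    qed
  qed
qed

lemma finite_lattice_staircase:
  fixes a :: "nat \<Rightarrow> nat"
  assumes "finite E" "\<forall>e\<in>E. v e \<le> n" "k \<le> n"
  shows "finite (staircase E v k n a)"
proof (rule finite_subset)
  show "staircase E v k n a \<subseteq> E \<rightarrow>\<^sub>E {0..sum a {k..n}}"
  proof
    fix y assume y: "y \<in> staircase E v k n a"
    have "y e \<le> sum a {k..n}" if "e \<in> E" for e
    proof -
      have "y e \<le> sum y {e\<in>E. v e \<le> n}"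
        using that assms by (intro member_le_sum) auto
      also have "\<dots> \<le> sum a {k..n}"
        using y assms(3) unfolding staircase_def by auto
      finally show ?thesis .
    qed
    then show "y \<in> E \<rightarrow>\<^sub>E {0..sum a {k..n}}"
      using y unfolding staircase_def by (auto simp: PiE_def Pi_def)
  qed
qed (rule finite_PiE; use assms(1) in simp)

lemma card_lattice_staircase_peel:
  fixes a :: "nat \<Rightarrow> nat"
  assumes "finite E" "\<forall>e\<in>E. v e \<le> n" "k \<le> n" "e \<in> E" "v e = k"
  shows "card (staircase E v k n a) =
    (\<Sum>t\<in>{0..a k}. card (staircase (E - {e}) v k n (a(k := a k - t))))"
proof -
  let ?S = "\<lambda>t. staircase (E - {e}) v k n (a(k := a k - t))"
  have peel_iff: "y(e := t) \<in> staircase E v k n a \<longleftrightarrow> t \<in> {0..a k} \<and> y \<in> ?S t"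
    if "y \<in> (E - {e}) \<rightarrow>\<^sub>E UNIV" for y t
    using staircase_peel_iff[where E = E and e = e and v = v and a = a, OF assms(1,4,5,3) that] .
  have S_PiE: "?S t \<subseteq> (E - {e}) \<rightarrow>\<^sub>E UNIV" for t
    unfolding staircase_def by auto
  have "bij_betw (\<lambda>y. (y e, y(e := undefined))) (staircase E v k n a) (SIGMA t:{0..a k}. ?S t)"
  proof (rule bij_betw_byWitness[where f' = "\<lambda>(t, y). y(e := t)"])
    show "(\<lambda>y. (y e, y(e := undefined))) ` staircase E v k n a \<subseteq> (SIGMA t:{0..a k}. ?S t)"
    proof (rule image_subsetI)
      fix y assume y: "y \<in> staircase E v k n a"
      have "y(e := undefined) \<in> (E - {e}) \<rightarrow>\<^sub>E UNIV"
        using y unfolding staircase_def by (auto simp: PiE_def extensional_def)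
      then show "(y e, y(e := undefined)) \<in> (SIGMA t:{0..a k}. ?S t)"
        using peel_iff[of "y(e := undefined)" "y e"] y by simp
    qed
    show "(\<lambda>(t, y). y(e := t)) ` (SIGMA t:{0..a k}. ?S t) \<subseteq> staircase E v k n a"
    proof clarify
      fix t y assume "t \<in> {0..a k}" "y \<in> ?S t"
      then show "y(e := t) \<in> staircase E v k n a"
        using peel_iff[of y t] S_PiE by blast
    qed
    show "\<forall>p\<in>SIGMA t:{0..a k}. ?S t. (\<lambda>y. (y e, y(e := undefined))) ((\<lambda>(t, y). y(e := t)) p) = p"
      using S_PiE by (fastforce simp: fun_eq_iff PiE_def extensional_def)
  qed simp
  then have "card (staircase E v k n a) = card (SIGMA t:{0..a k}. ?S t)"
    by (rule bij_betw_same_card)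
  also have "\<dots> = (\<Sum>t\<in>{0..a k}. card (?S t))"
    using assms by (intro card_SigmaI) (auto intro!: finite_lattice_staircase)
  finally show ?thesis .
qed

lemma card_lattice_staircase_eq:
  fixes \<Phi> :: "nat \<Rightarrow> (nat \<Rightarrow> nat) \<Rightarrow> (nat \<Rightarrow> nat) \<Rightarrow> nat"
  assumes \<Phi>_peel: "\<And>k c a. k \<le> n \<Longrightarrow> 1 \<le> c k \<Longrightarrow>
      \<Phi> k c a = (\<Sum>t\<in>{0..a k}. \<Phi> k (c(k := c k - 1)) (a(k := a k - t)))"
    and \<Phi>_merge: "\<And>k c a. k < n \<Longrightarrow> c k = 0 \<Longrightarrow> \<Phi> k c a = \<Phi> (Suc k) c (a(Suc k := a k + a (Suc k)))"
    and \<Phi>_last: "\<And>c a. c n = 0 \<Longrightarrow> \<Phi> n c a = 1"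
    and "finite E" "\<forall>e\<in>E. v e \<in> {k..n}" "k \<le> n" "\<forall>i\<in>{k..n}. c i = card {e\<in>E. v e = i}"
  shows "card (staircase E v k n a) = \<Phi> k c a"
  using assms(4-7)
proof (induction arbitrary: a rule: labelled_edges_induct)
  case (peel E k c e)
  have "card (staircase E v k n a) = (\<Sum>t\<in>{0..a k}. card (staircase (E - {e}) v k n (a(k := a k - t))))"
    using peel(1-5) by (intro card_lattice_staircase_peel) auto
  also have "\<dots> = (\<Sum>t\<in>{0..a k}. \<Phi> k (c(k := c k - 1)) (a(k := a k - t)))"
    by (intro sum.cong refl peel(7))
  also have "\<dots> = \<Phi> k c a"
    using \<Phi>_peel peel(3,6) by simp
  finally show ?case .
next
  case (merge E k c)
  have "card (staircase E v k n a) = card (staircase E v (Suc k) n (a(Suc k := a k + a (Suc k))))"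
    using merge(1,2) by (subst staircase_merge) auto
  also have "\<dots> = \<Phi> (Suc k) c (a(Suc k := a k + a (Suc k)))"
    by (rule merge(4))
  also have "\<dots> = \<Phi> k c a"
    using \<Phi>_merge merge(2,3) by simp
  finally show ?case .
next
  case (last c)
  then show ?case
    by (simp add: staircase_empty \<Phi>_last)
qed

lemma card_lattice_staircase_binomial:
  assumes "finite E" "\<forall>e\<in>E. v e \<in> {k..n}" "k \<le> n" "\<forall>i\<in>{k..n}. c i = card {e\<in>E. v e = i}"
  shows "card (staircase E v k n a) = dominating_sum k n c (binomial_weight a c)"
  by (rule card_lattice_staircase_eq[where \<Phi> = "\<lambda>k c a. dominating_sum k n c (binomial_weight a c)",
        OF _ _ _ assms])
     (simp_all add: binomial_weight_peel binomial_weight_merge dominating_sum_last binomial_weight_def)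

lemma card_lattice_staircase_multichoose:
  assumes "finite E" "\<forall>e\<in>E. v e \<in> {k..n}" "k \<le> n" "\<forall>i\<in>{k..n}. c i = card {e\<in>E. v e = i}"
  shows "card (staircase E v k n a) = dominating_sum k n c (multichoose_weight k a)"
  by (rule card_lattice_staircase_eq[where \<Phi> = "\<lambda>k c a. dominating_sum k n c (multichoose_weight k a)",
        OF _ _ _ assms])
     (simp_all add: multichoose_weight_peel multichoose_weight_merge dominating_sum_last multichoose_weight_def)

lemma staircase_sets:
  fixes a :: "nat \<Rightarrow> real"
  assumes "finite E"
  shows "staircase E v k n a \<in> sets (Pi\<^sub>M E (\<lambda>_. lborel))"
proof -
  have [measurable]: "(\<lambda>y. y e) \<in> borel_measurable (Pi\<^sub>M E (\<lambda>_. lborel))" if "e \<in> E" for e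
    using measurable_component_singleton[OF that, of "\<lambda>_. lborel"] by (simp add: measurable_lborel2)
  have [measurable]: "(\<lambda>y. sum y {e\<in>E. v e \<le> m}) \<in> borel_measurable (Pi\<^sub>M E (\<lambda>_. lborel))" for m
    by (intro borel_measurable_sum) simp
  have "staircase E v k n a = {y \<in> space (Pi\<^sub>M E (\<lambda>_. lborel)).
      (\<forall>e\<in>E. 0 \<le> y e) \<and> (\<forall>m\<in>{k..n}. sum y {e\<in>E. v e \<le> m} \<le> sum a {k..m})}"
    unfolding staircase_def by (auto simp: space_PiM PiE_def Pi_def)
  also have "\<dots> \<in> sets (Pi\<^sub>M E (\<lambda>_. lborel))"
    using assms by measurable
  finally show ?thesis .
qed

lemma emeasure_staircase_peel:
  fixes a :: "nat \<Rightarrow> real"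
  assumes "finite E" "e \<in> E" "v e = k" "k \<le> n"
  shows "emeasure (Pi\<^sub>M E (\<lambda>_. lborel)) (staircase E v k n a) =
    (\<integral>\<^sup>+t. indicator {0..a k} t *
       emeasure (Pi\<^sub>M (E - {e}) (\<lambda>_. lborel)) (staircase (E - {e}) v k n (a(k := a k - t))) \<partial>lborel)"
proof -
  interpret product_sigma_finite "\<lambda>_. lborel :: real measure"
    by standard
  let ?M = "\<lambda>A. Pi\<^sub>M A (\<lambda>_. lborel :: real measure)"
  let ?S = "\<lambda>t. staircase (E - {e}) v k n (a(k := a k - t))"
  have "emeasure (?M E) (staircase E v k n a) = (\<integral>\<^sup>+y. indicator (staircase E v k n a) y \<partial>?M E)"
    using staircase_sets[OF assms(1)] by simp
  also have "\<dots> = (\<integral>\<^sup>+y. indicator (staircase E v k n a) y \<partial>?M (insert e (E - {e})))"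
    unfolding insert_Diff[OF assms(2)] ..
  also have "\<dots> = (\<integral>\<^sup>+t. \<integral>\<^sup>+y. indicator (staircase E v k n a) (y(e := t)) \<partial>?M (E - {e}) \<partial>lborel)"
  proof (rule product_nn_integral_insert_rev)
    show "indicator (staircase E v k n a) \<in> borel_measurable (?M (insert e (E - {e})))"
      unfolding insert_Diff[OF assms(2)] using staircase_sets[OF assms(1)] by (rule borel_measurable_indicator)
  qed (use assms(1) in auto)
  also have "\<dots> = (\<integral>\<^sup>+t. \<integral>\<^sup>+y. indicator {0..a k} t * indicator (?S t) y \<partial>?M (E - {e}) \<partial>lborel)"
    using staircase_peel_iff[where E = E and e = e and v = v and a = a, OF assms(1-4)]
    by (intro nn_integral_cong) (auto simp: space_PiM indicator_def)
  also have "\<dots> = (\<integral>\<^sup>+t. indicator {0..a k} t * emeasure (?M (E - {e})) (?S t) \<partial>lborel)"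
    using staircase_sets[of "E - {e}"] assms(1) by (intro nn_integral_cong) (simp add: nn_integral_cmult)
  finally show ?thesis .
qed

lemma power_weight_peel_integral:
  assumes "k \<le> n" "1 \<le> c k" "\<forall>i. 0 \<le> a i"
  shows "(\<integral>\<^sup>+t. ennreal (dominating_sum k n (c(k := c k - 1)) (power_weight (a(k := a k - t))))
      * indicator {0..a k} t \<partial>lborel) = ennreal (dominating_sum k n c (power_weight a))"
proof -
  let ?c = "c(k := c k - 1)" and ?w = "power_weight a"
  let ?D = "dominating_compositions k n ?c"
  define Q where "Q j = (\<Prod>i\<in>{Suc k..n}. ?w i (j i))" for j
  have expand: "dominating_sum k n ?c (?w(k := u)) = (\<Sum>j\<in>?D. u (j k) * Q j)" for u
    unfolding dominating_sum_def Q_def using assms(1) by (simp add: prod.atLeast_Suc_atMost)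
  define f where "f t = (\<Sum>j\<in>?D. (a k - t) ^ j k / fact (j k) * Q j)" for t
  define F where "F t = - (\<Sum>j\<in>?D. (a k - t) ^ Suc (j k) / fact (Suc (j k)) * Q j)" for t
  have f: "dominating_sum k n ?c (power_weight (a(k := a k - t))) = f t" for t
  proof -
    have "power_weight (a(k := a k - t)) = ?w(k := \<lambda>x. (a k - t) ^ x / fact x)"
      by (auto simp: power_weight_def fun_eq_iff)
    then show ?thesis
      unfolding f_def by (simp only: expand)
  qed
  have "DERIV F t :> f t" for t
  proof -
    have "((\<lambda>t. (a k - t) ^ Suc m / fact (Suc m) * q) has_real_derivative - ((a k - t) ^ m / fact m * q)) (at t)"
      for m q
    proof -
      have "((\<lambda>t. (a k - t) ^ Suc m / fact (Suc m) * q) has_real_derivative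
          (of_nat (Suc m) * (a k - t) ^ m * (0 - 1) / fact (Suc m) * q)) (at t)"
        by (intro derivative_eq_intros) auto
      also have "of_nat (Suc m) * (a k - t) ^ m * (0 - 1) / fact (Suc m) * q = - ((a k - t) ^ m / fact m * q)"
        by (simp add: fact_Suc field_simps del: of_nat_Suc)
      finally show ?thesis .
    qed
    then have "((\<lambda>t. \<Sum>j\<in>?D. (a k - t) ^ Suc (j k) / fact (Suc (j k)) * Q j) has_real_derivative
        (\<Sum>j\<in>?D. - ((a k - t) ^ j k / fact (j k) * Q j))) (at t)"
      by (intro DERIV_sum)
    then show ?thesis
      unfolding F_def f_def sum_negf using DERIV_minus by fastforce
  qed
  moreover have "0 \<le> f t" if "t \<in> {0..a k}" for t
    unfolding f_def Q_def power_weight_def using that assms(3)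
    by (intro sum_nonneg mult_nonneg_nonneg divide_nonneg_nonneg prod_nonneg zero_le_power) auto
  ultimately have "(\<integral>\<^sup>+t. ennreal (f t) * indicator {0..a k} t \<partial>lborel) = ennreal (F (a k) - F 0)"
    using assms(3) by (intro nn_integral_FTC_Icc) (auto simp: f_def)
  also have "F (a k) - F 0 = dominating_sum k n ?c (?w(k := \<lambda>x. ?w k (Suc x)))"
    unfolding F_def expand by (simp add: power_weight_def)
  also have "\<dots> = dominating_sum k n c ?w"
    by (rule dominating_sum_peel[where c=c, OF assms(1,2), symmetric])
  finally show ?thesis
    by (simp only: f)
qed

lemma emeasure_staircase:
  assumes "finite E" "\<forall>e\<in>E. v e \<in> {k..n}" "k \<le> n" "\<forall>i\<in>{k..n}. c i = card {e\<in>E. v e = i}"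
    and "\<forall>i. 0 \<le> a i"
  shows "emeasure (Pi\<^sub>M E (\<lambda>_. lborel)) (staircase E v k n a) = ennreal (dominating_sum k n c (power_weight a))"
  using assms
proof (induction arbitrary: a rule: labelled_edges_induct)
  case (peel E k c e)
  have "emeasure (Pi\<^sub>M E (\<lambda>_. lborel)) (staircase E v k n a) =
      (\<integral>\<^sup>+t. indicator {0..a k} t * emeasure (Pi\<^sub>M (E - {e}) (\<lambda>_. lborel))
         (staircase (E - {e}) v k n (a(k := a k - t))) \<partial>lborel)"
    using peel(1,4,5,3) by (rule emeasure_staircase_peel)
  also have "\<dots> = (\<integral>\<^sup>+t. ennreal (dominating_sum k n (c(k := c k - 1)) (power_weight (a(k := a k - t))))
      * indicator {0..a k} t \<partial>lborel)"
  proof (rule nn_integral_cong)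
    fix t
    show "indicator {0..a k} t * emeasure (Pi\<^sub>M (E - {e}) (\<lambda>_. lborel)) (staircase (E - {e}) v k n (a(k := a k - t)))
        = ennreal (dominating_sum k n (c(k := c k - 1)) (power_weight (a(k := a k - t)))) * indicator {0..a k} t"
    proof (cases "t \<in> {0..a k}")
      case True
      then have "\<forall>i. 0 \<le> (a(k := a k - t)) i"
        using peel(8) by auto
      then have "emeasure (Pi\<^sub>M (E - {e}) (\<lambda>_. lborel)) (staircase (E - {e}) v k n (a(k := a k - t)))
          = ennreal (dominating_sum k n (c(k := c k - 1)) (power_weight (a(k := a k - t))))"
        by (rule peel(7))
      then show ?thesis
        using True by simp
    qed simp
  qed
  also have "\<dots> = ennreal (dominating_sum k n c (power_weight a))"
    using peel(3,6,8) by (rule power_weight_peel_integral)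
  finally show ?case .
next
  case (merge E k c)
  have "emeasure (Pi\<^sub>M E (\<lambda>_. lborel)) (staircase E v k n a) =
      emeasure (Pi\<^sub>M E (\<lambda>_. lborel)) (staircase E v (Suc k) n (a(Suc k := a k + a (Suc k))))"
    using merge(1,2,5) by (subst staircase_merge) auto
  also have "\<dots> = ennreal (dominating_sum (Suc k) n c (power_weight (a(Suc k := a k + a (Suc k)))))"
    using merge(5) by (intro merge(4)) simp
  also have "\<dots> = ennreal (dominating_sum k n c (power_weight a))"
    using power_weight_merge[where c=c, OF merge(2,3)] by simp
  finally show ?case .
next
  case (last c)
  then show ?case
    by (simp add: staircase_empty dominating_sum_last power_weight_def)
qed

section \<open>Flows on Pi_n(c)\<close>

definition multi_edge_list :: "nat \<Rightarrow> (nat \<Rightarrow> nat) \<Rightarrow> (nat \<times> nat) list" where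
  "multi_edge_list n c = concat (map (\<lambda>i. replicate (c i) (i, n + 1)) [1..<n + 1])"

definition multi_edges :: "nat \<Rightarrow> (nat \<Rightarrow> nat) \<Rightarrow> nat set" where
  "multi_edges n c = {n..<n + sum c {1..n}}"

definition edge_tail :: "nat \<Rightarrow> (nat \<Rightarrow> nat) \<Rightarrow> nat \<Rightarrow> nat" where
  "edge_tail n c e = fst (Pi_graph n c ! e)"

lemma sum_list_map_upt_Suc: "sum_list (map f [1..<n + 1]) = sum f {1..n}"
proof -
  have "sum_list (map f [1..<n + 1]) = sum f (set [1..<n + 1])"
    by (rule sum_list_distinct_conv_sum_set) simp
  also have "set [1..<n + 1] = {1..n}"
    by auto
  finally show ?thesis .
qed

lemma length_multi_edge_list: "length (multi_edge_list n c) = sum c {1..n}"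
  unfolding multi_edge_list_def
  by (simp only: length_concat map_map comp_def length_replicate sum_list_map_upt_Suc)

lemma Pi_graph_eq: "Pi_graph n c = map (\<lambda>i. (i, Suc i)) [1..<n + 1] @ multi_edge_list n c"
  unfolding Pi_graph_def multi_edge_list_def by simp

lemma length_Pi_graph: "length (Pi_graph n c) = n + sum c {1..n}"
  unfolding Pi_graph_eq by (simp add: length_multi_edge_list)

lemma Pi_graph_nth_path: "p < n \<Longrightarrow> Pi_graph n c ! p = (Suc p, Suc (Suc p))"
  unfolding Pi_graph_eq by (simp add: nth_append del: upt_Suc)

lemma Pi_graph_nth_multi:
  assumes "e \<in> multi_edges n c"
  shows "Pi_graph n c ! e = multi_edge_list n c ! (e - n)"
    and "snd (Pi_graph n c ! e) = n + 1" "edge_tail n c e \<in> {1..n}"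
proof -
  have "length (map (\<lambda>i. (i, Suc i)) [1..<n + 1]) = n"
    by simp
  then show nth: "Pi_graph n c ! e = multi_edge_list n c ! (e - n)"
    using assms unfolding Pi_graph_eq multi_edges_def by (simp add: nth_append del: upt_Suc)
  have "multi_edge_list n c ! (e - n) \<in> set (multi_edge_list n c)"
    using assms by (intro nth_mem) (auto simp: multi_edges_def length_multi_edge_list)
  then show "snd (Pi_graph n c ! e) = n + 1" "edge_tail n c e \<in> {1..n}"
    unfolding edge_tail_def nth by (auto simp: multi_edge_list_def split: if_splits)
qed

lemma card_multi_edges_tail:
  assumes "i \<in> {1..n}"
  shows "card {e \<in> multi_edges n c. edge_tail n c e = i} = c i"
proof -
  let ?L = "multi_edge_list n c"
  have "{e \<in> multi_edges n c. edge_tail n c e = i} = (\<lambda>p. n + p) ` {p. p < length ?L \<and> fst (?L ! p) = i}"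
  proof (intro set_eqI iffI)
    fix e assume "e \<in> {e \<in> multi_edges n c. edge_tail n c e = i}"
    then show "e \<in> (\<lambda>p. n + p) ` {p. p < length ?L \<and> fst (?L ! p) = i}"
      using Pi_graph_nth_multi(1)[of e n c]
      by (intro image_eqI[of _ _ "e - n"]) (auto simp: multi_edges_def length_multi_edge_list edge_tail_def)
  qed (auto simp: multi_edges_def length_multi_edge_list edge_tail_def Pi_graph_nth_multi(1))
  then have "card {e \<in> multi_edges n c. edge_tail n c e = i} = card {p. p < length ?L \<and> fst (?L ! p) = i}"
    by (simp add: card_image)
  also have "\<dots> = length (filter (\<lambda>x. fst x = i) ?L)"
    by (simp add: length_filter_conv_card)
  also have "\<dots> = sum_list (map (\<lambda>j. if j = i then c j else 0) [1..<n + 1])"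
    unfolding multi_edge_list_def
    by (simp add: filter_concat length_concat comp_def filter_replicate del: upt_Suc)
       (intro arg_cong[where f = sum_list] map_cong, auto)
  also have "\<dots> = sum (\<lambda>j. if j = i then c j else 0) {1..n}"
    by (rule sum_list_map_upt_Suc)
  also have "\<dots> = c i"
    using assms by simp
  finally show ?thesis .
qed

definition multi_outflow :: "nat \<Rightarrow> (nat \<Rightarrow> nat) \<Rightarrow> (nat \<Rightarrow> 'a::comm_monoid_add) \<Rightarrow> nat \<Rightarrow> 'a" where
  "multi_outflow n c y i = sum y {e \<in> multi_edges n c. edge_tail n c e = i}"

definition outflow_upto :: "nat \<Rightarrow> (nat \<Rightarrow> nat) \<Rightarrow> (nat \<Rightarrow> 'a::comm_monoid_add) \<Rightarrow> nat \<Rightarrow> 'a" where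
  "outflow_upto n c y m = sum y {e \<in> multi_edges n c. edge_tail n c e \<le> m}"

lemma outflow_upto_0: "outflow_upto n c y 0 = 0"
  using Pi_graph_nth_multi(3)[of _ n c] unfolding outflow_upto_def by (intro sum.neutral) fastforce

lemma outflow_upto_Suc: "outflow_upto n c y (Suc m) = outflow_upto n c y m + multi_outflow n c y (Suc m)"
proof -
  have "{e \<in> multi_edges n c. edge_tail n c e \<le> Suc m} =
      {e \<in> multi_edges n c. edge_tail n c e \<le> m} \<union> {e \<in> multi_edges n c. edge_tail n c e = Suc m}"
    by auto
  moreover have "sum y ({e \<in> multi_edges n c. edge_tail n c e \<le> m} \<union> {e \<in> multi_edges n c. edge_tail n c e = Suc m})
      = outflow_upto n c y m + multi_outflow n c y (Suc m)"
    unfolding outflow_upto_def multi_outflow_def by (rule sum.union_disjoint) (auto simp: multi_edges_def)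
  ultimately show ?thesis
    unfolding outflow_upto_def by simp
qed

lemma Pi_graph_out_edges:
  assumes "i \<in> {1..n}"
  shows "{k. k < length (Pi_graph n c) \<and> fst (Pi_graph n c ! k) = i}
    = insert (i - 1) {e \<in> multi_edges n c. edge_tail n c e = i}"
proof -
  have "k < length (Pi_graph n c) \<and> fst (Pi_graph n c ! k) = i \<longleftrightarrow>
      k = i - 1 \<or> (k \<in> multi_edges n c \<and> edge_tail n c k = i)" for k
  proof (cases "k < n")
    case True
    then have "k \<notin> multi_edges n c" "k < length (Pi_graph n c)"
      using assms by (auto simp: multi_edges_def length_Pi_graph)
    with True show ?thesis
      using assms by (auto simp: Pi_graph_nth_path)
  next
    case False
    then have "k \<noteq> i - 1"
      using assms by auto
    with False show ?thesis
      by (auto simp: length_Pi_graph multi_edges_def edge_tail_def)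
  qed
  then show ?thesis
    by auto
qed

lemma Pi_graph_in_edges:
  assumes "i \<in> {1..n}"
  shows "{k. k < length (Pi_graph n c) \<and> snd (Pi_graph n c ! k) = i} = (if 2 \<le> i then {i - 2} else {})"
proof -
  have "k < length (Pi_graph n c) \<and> snd (Pi_graph n c ! k) = i \<longleftrightarrow> 2 \<le> i \<and> k = i - 2" for k
  proof (cases "k < n")
    case False
    then have "k < length (Pi_graph n c) \<longleftrightarrow> k \<in> multi_edges n c"
      by (auto simp: length_Pi_graph multi_edges_def)
    then show ?thesis
      using False assms Pi_graph_nth_multi(2)[of k n c] by auto
  qed (use assms in \<open>auto simp: Pi_graph_nth_path length_Pi_graph\<close>)
  then show ?thesis
    by auto
qed

lemma Pi_graph_netflow:
  fixes g :: "nat \<Rightarrow> real"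
  assumes "i \<in> {1..n}"
  shows "(\<Sum>k\<in>{k. k < length (Pi_graph n c) \<and> fst (Pi_graph n c ! k) = i}. g k)
      - (\<Sum>k\<in>{k. k < length (Pi_graph n c) \<and> snd (Pi_graph n c ! k) = i}. g k)
    = g (i - 1) + multi_outflow n c g i - (if 2 \<le> i then g (i - 2) else 0)"
proof -
  have "i - 1 \<notin> {e \<in> multi_edges n c. edge_tail n c e = i}"
    using assms by (auto simp: multi_edges_def)
  moreover have "finite {e \<in> multi_edges n c. edge_tail n c e = i}"
    by (simp add: multi_edges_def)
  ultimately show ?thesis
    unfolding Pi_graph_out_edges[OF assms] Pi_graph_in_edges[OF assms] multi_outflow_def
    by simp
qed

lemma Pi_graph_conservation_iff:
  fixes g a :: "nat \<Rightarrow> real"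
  shows "(\<forall>i\<in>{1..n}. (\<Sum>k\<in>{k. k < length (Pi_graph n c) \<and> fst (Pi_graph n c ! k) = i}. g k)
        - (\<Sum>k\<in>{k. k < length (Pi_graph n c) \<and> snd (Pi_graph n c ! k) = i}. g k) = a i)
    \<longleftrightarrow> (\<forall>m\<in>{1..n}. g (m - 1) = sum a {1..m} - outflow_upto n c g m)"
    (is "(\<forall>i\<in>{1..n}. ?netflow i = a i) \<longleftrightarrow> ?paths")
proof -
  have local_iff: "(\<forall>i\<in>{1..n}. ?netflow i = a i) \<longleftrightarrow>
      (\<forall>i\<in>{1..n}. g (i - 1) + multi_outflow n c g i - (if 2 \<le> i then g (i - 2) else 0) = a i)"
    using Pi_graph_netflow[of _ n g c] by auto
  show ?thesis
    unfolding local_iff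
  proof (intro iffI ballI)
    fix m assume cons: "\<forall>i\<in>{1..n}. g (i - 1) + multi_outflow n c g i - (if 2 \<le> i then g (i - 2) else 0) = a i"
    show "m \<in> {1..n} \<Longrightarrow> g (m - 1) = sum a {1..m} - outflow_upto n c g m"
    proof (induction m)
      case (Suc m)
      have cons_m: "g m + multi_outflow n c g (Suc m) - (if 2 \<le> Suc m then g (Suc m - 2) else 0) = a (Suc m)"
        using cons Suc.prems by fastforce
      show ?case
      proof (cases "m = 0")
        case True
        then show ?thesis
          using cons_m by (simp add: outflow_upto_Suc outflow_upto_0 eq_diff_eq)
      next
        case False
        have "Suc m - 2 = m - 1"
          by simp
        moreover have "g (m - 1) = sum a {1..m} - outflow_upto n c g m"
          using Suc False by simp
        ultimately show ?thesis
          using cons_m False by (simp add: outflow_upto_Suc)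
      qed
    qed simp
  next
    fix i assume paths: ?paths and i: "i \<in> {1..n}"
    show "g (i - 1) + multi_outflow n c g i - (if 2 \<le> i then g (i - 2) else 0) = a i"
    proof (cases "i = 1")
      case True
      have "g 0 = sum a {1..1} - outflow_upto n c g 1"
        using bspec[OF paths i] True by simp
      then show ?thesis
        using True by (simp add: outflow_upto_Suc[of _ _ _ 0, simplified] outflow_upto_0)
    next
      case False
      define m where "m = i - 2"
      have m: "i = Suc (Suc m)"
        using i False unfolding m_def atLeastAtMost_iff by linarith
      have "Suc m \<in> {1..n}"
        using i m by simp
      from bspec[OF paths this] have "g m = sum a {1..Suc m} - outflow_upto n c g (Suc m)"
        by simp
      moreover from bspec[OF paths i]
      have "g (Suc m) = sum a {1..Suc (Suc m)} - outflow_upto n c g (Suc (Suc m))"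
        unfolding m by simp
      ultimately show ?thesis
        using m by (simp add: outflow_upto_Suc)
    qed
  qed
qed

lemma flow_polytope_Pi_graph_iff:
  "g \<in> flow_polytope n (Pi_graph n c) a \<longleftrightarrow>
    (\<forall>k. n + sum c {1..n} \<le> k \<longrightarrow> g k = 0) \<and> (\<forall>k < n + sum c {1..n}. 0 \<le> g k) \<and>
    (\<forall>m\<in>{1..n}. g (m - 1) = sum a {1..m} - outflow_upto n c g m)"
  unfolding flow_polytope_def mem_Collect_eq
  by (simp only: Pi_graph_conservation_iff) (simp only: length_Pi_graph)

text \<open>Path edge number k is (k+1, k+2); by conservation at the vertices 1..k+1 it carries
  a_1 + ... + a_(k+1) minus what leaves these vertices along multiple edges.\<close>

definition complete_flow ::
    "nat \<Rightarrow> (nat \<Rightarrow> nat) \<Rightarrow> (nat \<Rightarrow> 'a::{comm_monoid_add,minus}) \<Rightarrow> (nat \<Rightarrow> 'a) \<Rightarrow> nat \<Rightarrow> 'a" where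
  "complete_flow n c a y k = (if k \<in> multi_edges n c then y k
     else if k < n then sum a {1..Suc k} - outflow_upto n c y (Suc k) else 0)"

lemma outflow_upto_complete_flow: "outflow_upto n c (complete_flow n c a y) m = outflow_upto n c y m"
  unfolding outflow_upto_def complete_flow_def by (intro sum.cong) auto

lemma restrict_complete_flow:
  "y \<in> multi_edges n c \<rightarrow>\<^sub>E UNIV \<Longrightarrow> restrict (complete_flow n c a y) (multi_edges n c) = y"
  by (auto simp: fun_eq_iff complete_flow_def PiE_def extensional_def)

lemma complete_flow_in_flow_polytope:
  fixes a y :: "nat \<Rightarrow> real"
  assumes "y \<in> staircase (multi_edges n c) (edge_tail n c) 1 n a"
  shows "complete_flow n c a y \<in> flow_polytope n (Pi_graph n c) a"
proof -
  have y_nonneg: "0 \<le> y e" if "e \<in> multi_edges n c" for e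
    using assms that unfolding staircase_def by auto
  have budget: "outflow_upto n c y m \<le> sum a {1..m}" if "m \<in> {1..n}" for m
    using assms that unfolding staircase_def outflow_upto_def by auto
  show ?thesis
    unfolding flow_polytope_Pi_graph_iff outflow_upto_complete_flow
  proof (intro conjI allI impI ballI)
    fix k assume "k < n + sum c {1..n}"
    then show "0 \<le> complete_flow n c a y k"
      using y_nonneg budget[of "Suc k"] by (auto simp: complete_flow_def multi_edges_def)
  next
    fix m assume "m \<in> {1..n}"
    then show "complete_flow n c a y (m - 1) = sum a {1..m} - outflow_upto n c y m"
      by (auto simp: complete_flow_def multi_edges_def)
  qed (simp add: complete_flow_def multi_edges_def)
qed

lemma flow_polytope_Pi_graph_eqI:
  assumes "g \<in> flow_polytope n (Pi_graph n c) a" "g' \<in> flow_polytope n (Pi_graph n c) a"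
    and "\<forall>e\<in>multi_edges n c. g e = g' e"
  shows "g = g'"
proof
  fix k
  have outflow: "outflow_upto n c g m = outflow_upto n c g' m" for m
    using assms(3) unfolding outflow_upto_def by (intro sum.cong) auto
  consider "k \<in> multi_edges n c" | "k < n" | "n + sum c {1..n} \<le> k"
    by (force simp: multi_edges_def)
  then show "g k = g' k"
  proof cases
    case 2
    then have "Suc k \<in> {1..n}"
      by simp
    then show ?thesis
      using assms(1,2) outflow unfolding flow_polytope_Pi_graph_iff by (metis diff_Suc_1)
  qed (use assms in \<open>auto simp: flow_polytope_Pi_graph_iff\<close>)
qed

lemma restrict_flow_polytope_Pi_graph:
  "(\<lambda>g. restrict g (multi_edges n c)) ` flow_polytope n (Pi_graph n c) a
    = staircase (multi_edges n c) (edge_tail n c) 1 n a"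
proof (intro set_eqI iffI)
  fix y assume "y \<in> (\<lambda>g. restrict g (multi_edges n c)) ` flow_polytope n (Pi_graph n c) a"
  then obtain g where g: "g \<in> flow_polytope n (Pi_graph n c) a" and y: "y = restrict g (multi_edges n c)"
    by blast
  have "outflow_upto n c y m \<le> sum a {1..m}" if "m \<in> {1..n}" for m
  proof -
    have "outflow_upto n c y m = outflow_upto n c g m"
      unfolding y outflow_upto_def by (intro sum.cong) auto
    moreover have "g (m - 1) = sum a {1..m} - outflow_upto n c g m"
      using g that unfolding flow_polytope_Pi_graph_iff by blast
    moreover have "m - 1 < n + sum c {1..n}"
      using that by auto
    then have "0 \<le> g (m - 1)"
      using g unfolding flow_polytope_Pi_graph_iff by blast
    ultimately show ?thesis
      by simp
  qed
  moreover have "y \<in> multi_edges n c \<rightarrow>\<^sub>E {0..}"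
    using g unfolding y flow_polytope_Pi_graph_iff by (auto simp: multi_edges_def)
  ultimately show "y \<in> staircase (multi_edges n c) (edge_tail n c) 1 n a"
    unfolding staircase_def outflow_upto_def by auto
next
  fix y assume y: "y \<in> staircase (multi_edges n c) (edge_tail n c) 1 n a"
  then have "restrict (complete_flow n c a y) (multi_edges n c) = y"
    unfolding staircase_def by (intro restrict_complete_flow) auto
  with complete_flow_in_flow_polytope[OF y]
  show "y \<in> (\<lambda>g. restrict g (multi_edges n c)) ` flow_polytope n (Pi_graph n c) a"
    by (metis image_eqI)
qed

lemma multi_edges_labelling:
  shows "finite (multi_edges n c)"
    and "\<forall>e\<in>multi_edges n c. edge_tail n c e \<in> {1..n}"
    and "\<forall>i\<in>{1..n}. c i = card {e \<in> multi_edges n c. edge_tail n c e = i}"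
  using Pi_graph_nth_multi(3) card_multi_edges_tail by (auto simp: multi_edges_def)

lemma kostant_eq_card_real_flows:
  "kostant n G (\<lambda>i. int (a i)) = card {f. (\<lambda>k. real (f k)) \<in> flow_polytope n G (\<lambda>i. real (a i))}"
proof -
  have "int x - int y = int z \<longleftrightarrow> real x - real y = real z" for x y z
    by linarith
  then show ?thesis
    unfolding kostant_def flow_polytope_def by (simp flip: of_nat_sum)
qed

lemma lattice_staircase_iff:
  fixes y a :: "nat \<Rightarrow> nat"
  assumes "y \<in> E \<rightarrow>\<^sub>E UNIV"
  shows "y \<in> staircase E v k n a \<longleftrightarrow> restrict (\<lambda>e. real (y e)) E \<in> staircase E v k n (\<lambda>i. real (a i))"
proof -
  have "sum (restrict (\<lambda>e. real (y e)) E) {e\<in>E. v e \<le> m} = real (sum y {e\<in>E. v e \<le> m})" for m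
    by (simp add: of_nat_sum)
  then show ?thesis
    using assms unfolding staircase_def by (simp flip: of_nat_sum)
qed

text \<open>The staircase inequalities guarantee that the subtraction in complete_flow does not truncate.\<close>

lemma of_nat_complete_flow:
  fixes y a :: "nat \<Rightarrow> nat"
  assumes "y \<in> staircase (multi_edges n c) (edge_tail n c) 1 n a"
  shows "(\<lambda>k. real (complete_flow n c a y k))
    = complete_flow n c (\<lambda>i. real (a i)) (restrict (\<lambda>e. real (y e)) (multi_edges n c))"
proof
  fix k
  have "outflow_upto n c y (Suc k) \<le> sum a {1..Suc k}" if "k < n"
  proof -
    have "Suc k \<in> {1..n}"
      using that by simp
    then show ?thesis
      using assms unfolding staircase_def outflow_upto_def by blast
  qed
  moreover have "outflow_upto n c (restrict (\<lambda>e. real (y e)) (multi_edges n c)) m = real (outflow_upto n c y m)" for m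
    unfolding outflow_upto_def by (simp add: of_nat_sum)
  ultimately show "real (complete_flow n c a y k)
      = complete_flow n c (\<lambda>i. real (a i)) (restrict (\<lambda>e. real (y e)) (multi_edges n c)) k"
    by (simp add: complete_flow_def of_nat_diff of_nat_sum)
qed

lemma bij_betw_restrict_integer_flows:
  "bij_betw (\<lambda>f. restrict f (multi_edges n c))
     {f. (\<lambda>k. real (f k)) \<in> flow_polytope n (Pi_graph n c) (\<lambda>i. real (a i))}
     (staircase (multi_edges n c) (edge_tail n c) 1 n a)"
proof (rule bij_betw_imageI)
  let ?F = "{f. (\<lambda>k. real (f k)) \<in> flow_polytope n (Pi_graph n c) (\<lambda>i. real (a i))}"
  let ?M = "multi_edges n c"
  show "inj_on (\<lambda>f. restrict f ?M) ?F"
  proof (rule inj_onI)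
    fix f f' assume f: "f \<in> ?F" and f': "f' \<in> ?F" and "restrict f ?M = restrict f' ?M"
    then have "\<forall>e\<in>?M. real (f e) = real (f' e)"
      by (metis restrict_apply')
    with f f' have "(\<lambda>k. real (f k)) = (\<lambda>k. real (f' k))"
      by (intro flow_polytope_Pi_graph_eqI) auto
    then show "f = f'"
      by (simp add: fun_eq_iff)
  qed
  have real_restrict: "restrict (\<lambda>e. real (restrict f ?M e)) ?M = restrict (\<lambda>k. real (f k)) ?M" for f :: "nat \<Rightarrow> nat"
    by auto
  show "(\<lambda>f. restrict f ?M) ` ?F = staircase ?M (edge_tail n c) 1 n a"
  proof (intro set_eqI iffI)
    fix y assume "y \<in> (\<lambda>f. restrict f ?M) ` ?F"
    then obtain f where f: "f \<in> ?F" and y: "y = restrict f ?M"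
      by blast
    have "restrict (\<lambda>k. real (f k)) ?M \<in> staircase ?M (edge_tail n c) 1 n (\<lambda>i. real (a i))"
      using f restrict_flow_polytope_Pi_graph by blast
    moreover have "restrict f ?M \<in> ?M \<rightarrow>\<^sub>E UNIV"
      by simp
    ultimately show "y \<in> staircase ?M (edge_tail n c) 1 n a"
      unfolding y using lattice_staircase_iff real_restrict by metis
  next
    fix y assume y: "y \<in> staircase ?M (edge_tail n c) 1 n a"
    then have "restrict (\<lambda>e. real (y e)) ?M \<in> staircase ?M (edge_tail n c) 1 n (\<lambda>i. real (a i))"
      using lattice_staircase_iff[of y ?M] unfolding staircase_def by blast
    then have "complete_flow n c a y \<in> ?F"
      using complete_flow_in_flow_polytope of_nat_complete_flow[OF y] by simp
    moreover have "restrict (complete_flow n c a y) ?M = y"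
      using y unfolding staircase_def by (intro restrict_complete_flow) auto
    ultimately show "y \<in> (\<lambda>f. restrict f ?M) ` ?F"
      by (metis image_eqI)
  qed
qed

lemma kostant_Pi_graph_eq_card_staircase:
  "kostant n (Pi_graph n c) (\<lambda>i. int (a i)) = card (staircase (multi_edges n c) (edge_tail n c) 1 n a)"
  unfolding kostant_eq_card_real_flows by (rule bij_betw_same_card[OF bij_betw_restrict_integer_flows])

lemma vol_Pi_flow_eq:
  assumes "1 \<le> n" "\<forall>i. 0 \<le> a i"
  shows "vol_Pi_flow n c a = fact (sum c {1..n}) * dominating_sum 1 n c (power_weight a)"
proof -
  have "emeasure (Pi\<^sub>M (multi_edges n c) (\<lambda>_. lborel)) (staircase (multi_edges n c) (edge_tail n c) 1 n a)
      = ennreal (dominating_sum 1 n c (power_weight a))"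
    using multi_edges_labelling assms by (intro emeasure_staircase) auto
  moreover have "0 \<le> dominating_sum 1 n c (power_weight a)"
    unfolding dominating_sum_def power_weight_def using assms(2)
    by (intro sum_nonneg prod_nonneg divide_nonneg_nonneg zero_le_power) auto
  ultimately have "measure (Pi\<^sub>M (multi_edges n c) (\<lambda>_. lborel)) (staircase (multi_edges n c) (edge_tail n c) 1 n a)
      = dominating_sum 1 n c (power_weight a)"
    by (simp add: measure_def)
  then show ?thesis
    unfolding vol_Pi_flow_def norm_vol_proj_def
    using restrict_flow_polytope_Pi_graph[of n c a] by (simp add: multi_edges_def)
qed

lemma kostant_Pi_graph_binomial:
  assumes "1 \<le> n"
  shows "kostant n (Pi_graph n c) (\<lambda>i. int (a i)) = dominating_sum 1 n c (binomial_weight a c)"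
  unfolding kostant_Pi_graph_eq_card_staircase
  using multi_edges_labelling assms by (intro card_lattice_staircase_binomial) auto

lemma kostant_Pi_graph_multichoose:
  assumes "1 \<le> n"
  shows "kostant n (Pi_graph n c) (\<lambda>i. int (a i)) = dominating_sum 1 n c (multichoose_weight 1 a)"
  unfolding kostant_Pi_graph_eq_card_staircase
  using multi_edges_labelling assms by (intro card_lattice_staircase_multichoose) auto

lemma prod_multichoose_weight_first:
  assumes "1 \<le> n"
  shows "(\<Prod>i\<in>{1..n}. multichoose_weight 1 a i (j i))
    = ((a 1 + j 1) choose j 1) * (\<Prod>i\<in>{2..n}. (a i + j i - 1) choose j i)"
proof -
  have "(\<Prod>i\<in>{1..n}. multichoose_weight 1 a i (j i))
      = multichoose_weight 1 a 1 (j 1) * (\<Prod>i\<in>{2..n}. multichoose_weight 1 a i (j i))"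
    using assms by (simp add: prod.atLeast_Suc_atMost numeral_2_eq_2)
  also have "(\<Prod>i\<in>{2..n}. multichoose_weight 1 a i (j i)) = (\<Prod>i\<in>{2..n}. (a i + j i - 1) choose j i)"
    by (intro prod.cong) (auto simp: multichoose_weight_def)
  finally show ?thesis
    by (simp add: multichoose_weight_def)
qed

theorem corollary6p16:
  fixes n :: nat and a c :: "nat \<Rightarrow> nat"
  assumes "n \<ge> 1"
  shows "(vol_Pi_flow n c (\<lambda>i. real (a i))
           = (\<Sum>j\<in>dom_compositions n c.
                fact (sum c {1..n}) / (\<Prod>i\<in>{1..n}. fact (j i)) * (\<Prod>i\<in>{1..n}. real (a i) ^ j i))) \<and>
         (kostant n (Pi_graph n c) (\<lambda>i. int (a i))
           = (\<Sum>j\<in>dom_compositions n c. \<Prod>i\<in>{1..n}. (a i + c i) choose j i)) \<and>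
         (kostant n (Pi_graph n c) (\<lambda>i. int (a i))
           = (\<Sum>j\<in>dom_compositions n c.
                ((a 1 + j 1) choose j 1) * (\<Prod>i\<in>{2..n}. (a i + j i - 1) choose j i)))"
proof (intro conjI)
  have "vol_Pi_flow n c (\<lambda>i. real (a i))
      = fact (sum c {1..n}) * dominating_sum 1 n c (power_weight (\<lambda>i. real (a i)))"
    using assms by (intro vol_Pi_flow_eq) auto
  then show "vol_Pi_flow n c (\<lambda>i. real (a i)) = (\<Sum>j\<in>dom_compositions n c.
      fact (sum c {1..n}) / (\<Prod>i\<in>{1..n}. fact (j i)) * (\<Prod>i\<in>{1..n}. real (a i) ^ j i))"
    unfolding dominating_sum_def dom_compositions_eq power_weight_def sum_distrib_left
    by (simp add: prod_dividef)
  show "kostant n (Pi_graph n c) (\<lambda>i. int (a i))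
      = (\<Sum>j\<in>dom_compositions n c. \<Prod>i\<in>{1..n}. (a i + c i) choose j i)"
    unfolding kostant_Pi_graph_binomial[OF assms] dominating_sum_def dom_compositions_eq binomial_weight_def ..
  show "kostant n (Pi_graph n c) (\<lambda>i. int (a i)) = (\<Sum>j\<in>dom_compositions n c.
      ((a 1 + j 1) choose j 1) * (\<Prod>i\<in>{2..n}. (a i + j i - 1) choose j i))"
    unfolding kostant_Pi_graph_multichoose[OF assms] dominating_sum_def dom_compositions_eq
      prod_multichoose_weight_first[OF assms] ..
qed

end
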